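(* Let $v=[q;w_1,\ldots,w_n]$ be a WVG, $i$ a player, and $S\subseteq N\setminus\{i\}$ a coalition. Then $\phi_i(v)\le\phi_{\&(\{i\}\cup S)}(v_{\&(\{i\}\cup S)})\le 1$; that is, annexation never decreases a player's Shapley–Shubik index.
   Context: A weighted voting game (WVG) $v=[q;w_1,\ldots,w_n]$ has player set $N=\{1,\ldots,n\}$, nonnegative weights $w_j$ and quota $q$ with $0<q\le \sum_j w_j$; $v(X)=1$ if $\sum_{j\in X}w_j\ge q$ and $0$ otherwise. The Shapley–Shubik index of player $j$ in a game with player set $M$, $|M|=m$, is $\phi_j=\frac{1}{m!}\sum_{X\subseteq M,\,j\in X}(|X|-1)!\,(m-|X|)!\,(v(X)-v(X\setminus\{j\}))$. For $T\subseteq N$, the merged game $v_{\&T}$ is the WVG with the same quota on player set $(N\setminus T)\cup\{\&T\}$, where players outside $T$ keep their weights and $\&T$ has weight $\sum_{j\in T}w_j$. *)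

theory Defs
  imports Complex_Main
begin

definition wvg :: "real \<Rightarrow> ('a \<Rightarrow> real) \<Rightarrow> 'a set \<Rightarrow> real" where
  "wvg q w X = (if sum w X \<ge> q then 1 else 0)"

definition shapley :: "'a set \<Rightarrow> ('a set \<Rightarrow> real) \<Rightarrow> 'a \<Rightarrow> real" where
  "shapley M v j = (1 / fact (card M)) *
     (\<Sum>X\<in>{X. X \<subseteq> M \<and> j \<in> X}.
        fact (card X - 1) * fact (card M - card X) * (v X - v (X - {j})))"

text \<open>Merged game: players outside T are represented by Some j (keeping weight w j),
  the merged player &T is represented by None with weight the total weight of T.\<close>
definition merged_players :: "'a set \<Rightarrow> 'a set \<Rightarrow> 'a option set" where
  "merged_players N T = Some ` (N - T) \<union> {None}"

definition merged_weight :: "('a \<Rightarrow> real) \<Rightarrow> 'a set \<Rightarrow> 'a option \<Rightarrow> real" where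
  "merged_weight w T p = (case p of None \<Rightarrow> sum w T | Some j \<Rightarrow> w j)"

end

theory Submission
  imports Defs
begin

(* Write the index of player j in marginal form: a sum over the coalitions X not
   containing j of the weight  ss_weight |M| |X| = |X|! (|M|-|X|-1)! / |M|!  times the
   marginal contribution v(X + j) - v(X).  These weights obey a Pascal-type
   recurrence, which yields the key identity: summing the weights ss_weight (m+|S|) (y+|Z|)
   over all Z \<subseteq> S gives ss_weight m y.  For the player set N, T = {i} + S and
   A = N - T, split every coalition avoiding i as Y + Z with Y \<subseteq> A, Z \<subseteq> S.  By
   monotonicity of the game each marginal contribution v(Y+Z+i) - v(Y+Z) is at most
   v(Y+T) - v(Y); collapsing the Z-sum with the key identity bounds the index of i by
   the sum over Y \<subseteq> A of ss_weight (|A|+1) |Y| (v(Y+T) - v(Y)), which is exactly the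
   index of the merged player in the merged weighted voting game.  The bound by 1 is
   the key identity for S = M - {j} together with 0 \<le> v \<le> 1. *)

text \<open>Weight of a coalition of size k (not containing the player) in an n-player game.\<close>
definition ss_weight :: "nat \<Rightarrow> nat \<Rightarrow> real" where
  "ss_weight n k = fact k * fact (n - k - 1) / fact n"

lemma ss_weight_nonneg: "ss_weight n k \<ge> 0"
  unfolding ss_weight_def by simp

lemma ss_weight_split:
  assumes "k < n"
  shows "ss_weight (Suc n) k + ss_weight (Suc n) (Suc k) = ss_weight n k"
proof -
  obtain d where n: "n = Suc (k + d)" using assms less_imp_Suc_add by blast
  have "ss_weight (Suc n) k + ss_weight (Suc n) (Suc k)
        = fact k * fact (Suc d) / fact (Suc n) + fact (Suc k) * fact d / fact (Suc n)"
    unfolding ss_weight_def n by simp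
  also have "\<dots> = fact k * fact d * real (Suc n) / (real (Suc n) * fact n)"
    using n by (simp add: fact_Suc algebra_simps add_divide_distrib)
  also have "\<dots> = ss_weight n k"
    unfolding ss_weight_def n by simp
  finally show ?thesis .
qed

lemma sum_Pow_Un:
  assumes "finite A" "finite B" "A \<inter> B = {}"
  shows "(\<Sum>X\<in>Pow (A \<union> B). h X) = (\<Sum>Y\<in>Pow A. \<Sum>Z\<in>Pow B. h (Y \<union> Z))"
proof -
  let ?u = "\<lambda>(Y, Z). Y \<union> Z"
  have inj: "inj_on ?u (Pow A \<times> Pow B)"
  proof (rule inj_onI, clarsimp)
    fix Y Z Y' Z'
    assume "Y \<subseteq> A" "Z \<subseteq> B" "Y' \<subseteq> A" "Z' \<subseteq> B" and eq: "Y \<union> Z = Y' \<union> Z'"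
    then have "Y = (Y \<union> Z) \<inter> A" "Z = (Y \<union> Z) \<inter> B" "Y' = (Y' \<union> Z') \<inter> A" "Z' = (Y' \<union> Z') \<inter> B"
      using assms(3) by auto
    then show "Y = Y' \<and> Z = Z'" using eq by metis
  qed
  have "Pow (A \<union> B) = ?u ` (Pow A \<times> Pow B)"
  proof
    show "Pow (A \<union> B) \<subseteq> ?u ` (Pow A \<times> Pow B)"
    proof
      fix X assume "X \<in> Pow (A \<union> B)"
      then have "X = ?u (X \<inter> A, X \<inter> B)" "(X \<inter> A, X \<inter> B) \<in> Pow A \<times> Pow B" by auto
      then show "X \<in> ?u ` (Pow A \<times> Pow B)" by (rule image_eqI)
    qed
  qed blast
  then have "(\<Sum>X\<in>Pow (A \<union> B). h X) = (\<Sum>p\<in>Pow A \<times> Pow B. h (?u p))"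
    by (simp add: sum.reindex[OF inj] del: Pow_iff)
  also have "\<dots> = (\<Sum>Y\<in>Pow A. \<Sum>Z\<in>Pow B. h (Y \<union> Z))"
    by (simp add: sum.cartesian_product split_def)
  finally show ?thesis .
qed

lemma ss_weight_sum_Pow:
  assumes "finite S" "y < m"
  shows "(\<Sum>Z\<in>Pow S. ss_weight (m + card S) (y + card Z)) = ss_weight m y"
  using assms(1)
proof (induction S rule: finite_induct)
  case empty
  then show ?case by simp
next
  case (insert a S)
  let ?n = "m + card S"
  have "(\<Sum>Z\<in>Pow (insert a S). ss_weight (m + card (insert a S)) (y + card Z))
      = (\<Sum>Z\<in>Pow S. \<Sum>W\<in>Pow {a}. ss_weight (Suc ?n) (y + card (Z \<union> W)))"
    using insert.hyps sum_Pow_Un[of S "{a}"] by simp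
  also have "\<dots> = (\<Sum>Z\<in>Pow S. ss_weight (Suc ?n) (y + card Z) + ss_weight (Suc ?n) (Suc (y + card Z)))"
  proof (rule sum.cong)
    fix Z assume "Z \<in> Pow S"
    then have "finite Z" "a \<notin> Z" using insert.hyps by (auto intro: finite_subset)
    then show "(\<Sum>W\<in>Pow {a}. ss_weight (Suc ?n) (y + card (Z \<union> W)))
             = ss_weight (Suc ?n) (y + card Z) + ss_weight (Suc ?n) (Suc (y + card Z))"
      by (simp add: Pow_insert)
  qed simp
  also have "\<dots> = (\<Sum>Z\<in>Pow S. ss_weight ?n (y + card Z))"
  proof (rule sum.cong)
    fix Z assume "Z \<in> Pow S"
    then have "card Z \<le> card S" using insert.hyps by (intro card_mono) auto
    then show "ss_weight (Suc ?n) (y + card Z) + ss_weight (Suc ?n) (Suc (y + card Z))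
             = ss_weight ?n (y + card Z)"
      using assms(2) by (intro ss_weight_split) simp
  qed simp
  also have "\<dots> = ss_weight m y" by (rule insert.IH)
  finally show ?case .
qed

lemma shapley_marginal_form:
  assumes "finite M" "j \<in> M"
  shows "shapley M v j = (\<Sum>X\<in>Pow (M - {j}). ss_weight (card M) (card X) * (v (insert j X) - v X))"
proof -
  have inj: "inj_on (insert j) (Pow (M - {j}))"
    by (rule inj_onI) (metis Diff_insert_absorb PowD insert_Diff_single subset_Diff_insert)
  have coalitions: "{X. X \<subseteq> M \<and> j \<in> X} = insert j ` Pow (M - {j})"
  proof
    show "{X. X \<subseteq> M \<and> j \<in> X} \<subseteq> insert j ` Pow (M - {j})"
    proof
      fix X assume "X \<in> {X. X \<subseteq> M \<and> j \<in> X}"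
      then have "X = insert j (X - {j})" "X - {j} \<in> Pow (M - {j})" by auto
      then show "X \<in> insert j ` Pow (M - {j})" by (rule image_eqI)
    qed
  qed (use assms in auto)
  have "shapley M v j = (\<Sum>X\<in>Pow (M - {j}). 1 / fact (card M) *
        (fact (card (insert j X) - 1) * fact (card M - card (insert j X)) * (v (insert j X) - v (insert j X - {j}))))"
    unfolding shapley_def coalitions by (simp add: sum.reindex[OF inj] sum_distrib_left)
  also have "\<dots> = (\<Sum>X\<in>Pow (M - {j}). ss_weight (card M) (card X) * (v (insert j X) - v X))"
  proof (rule sum.cong)
    fix X assume X: "X \<in> Pow (M - {j})"
    then have "finite X" "j \<notin> X" "insert j X - {j} = X"
      using assms(1) by (auto intro: finite_subset)
    then show "1 / fact (card M) * (fact (card (insert j X) - 1) * fact (card M - card (insert j X))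
                 * (v (insert j X) - v (insert j X - {j})))
             = ss_weight (card M) (card X) * (v (insert j X) - v X)"
      unfolding ss_weight_def by simp
  qed simp
  finally show ?thesis .
qed

text \<open>For a game with values in [0,1] the index is at most 1, since the weights sum to 1.\<close>
lemma shapley_le_one:
  assumes "finite M" "j \<in> M" and bounded: "\<And>X. 0 \<le> v X \<and> v X \<le> 1"
  shows "shapley M v j \<le> 1"
proof -
  have card_M: "card M = 1 + card (M - {j})"
    using assms(1,2) card_Suc_Diff1 by fastforce
  have "shapley M v j = (\<Sum>X\<in>Pow (M - {j}). ss_weight (card M) (card X) * (v (insert j X) - v X))"
    using assms(1,2) by (rule shapley_marginal_form)
  also have "\<dots> \<le> (\<Sum>X\<in>Pow (M - {j}). ss_weight (1 + card (M - {j})) (0 + card X))"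
  proof (rule sum_mono)
    fix X
    have "v (insert j X) - v X \<le> 1" using bounded[of "insert j X"] bounded[of X] by simp
    then show "ss_weight (card M) (card X) * (v (insert j X) - v X) \<le> ss_weight (1 + card (M - {j})) (0 + card X)"
      using ss_weight_nonneg[of "card M" "card X"] card_M by (simp add: mult_left_le)
  qed
  also have "\<dots> = ss_weight 1 0"
    using assms(1) by (intro ss_weight_sum_Pow) auto
  also have "\<dots> = 1" by (simp add: ss_weight_def)
  finally show ?thesis .
qed

lemma shapley_le_annexation_sum:
  fixes v :: "'a set \<Rightarrow> real"
  assumes "finite N" "i \<in> N" "S \<subseteq> N - {i}"
    and mono: "\<And>X Y. X \<subseteq> Y \<Longrightarrow> Y \<subseteq> N \<Longrightarrow> v X \<le> v Y"
  defines "T \<equiv> insert i S"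
  shows "shapley N v i
         \<le> (\<Sum>Y\<in>Pow (N - T). ss_weight (card (N - T) + 1) (card Y) * (v (Y \<union> T) - v Y))"
proof -
  define A where "A = N - T"
  have fin: "finite A" "finite S" using assms(1,3) unfolding A_def by (auto intro: finite_subset)
  have split: "N - {i} = A \<union> S" "A \<inter> S = {}" using assms(2,3) unfolding A_def T_def by auto
  have card_N: "card N = (card A + 1) + card S"
  proof -
    have "N = A \<union> T" "A \<inter> T = {}" "card T = card S + 1"
      using assms(2,3) fin unfolding A_def T_def by (auto simp: card_insert_if)
    then show ?thesis using fin assms(1) by (simp add: card_Un_disjoint)
  qed
  have "shapley N v i = (\<Sum>X\<in>Pow (A \<union> S). ss_weight (card N) (card X) * (v (insert i X) - v X))"
    using shapley_marginal_form[OF assms(1,2)] split by simp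
  also have "\<dots> = (\<Sum>Y\<in>Pow A. \<Sum>Z\<in>Pow S.
                    ss_weight (card N) (card (Y \<union> Z)) * (v (insert i (Y \<union> Z)) - v (Y \<union> Z)))"
    using fin split by (intro sum_Pow_Un) auto
  also have "\<dots> \<le> (\<Sum>Y\<in>Pow A. \<Sum>Z\<in>Pow S.
                    ss_weight ((card A + 1) + card S) (card Y + card Z) * (v (Y \<union> T) - v Y))"
  proof (intro sum_mono)
    fix Y Z assume Y: "Y \<in> Pow A" and Z: "Z \<in> Pow S"
    have "Y \<inter> Z = {}" "finite Y" "finite Z" using Y Z split fin by (auto intro: finite_subset)
    then have card_YZ: "card (Y \<union> Z) = card Y + card Z" by (simp add: card_Un_disjoint)
    have "v (insert i (Y \<union> Z)) \<le> v (Y \<union> T)" "v Y \<le> v (Y \<union> Z)"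
      using Y Z assms(2,3) unfolding A_def T_def by (auto intro!: mono)
    then show "ss_weight (card N) (card (Y \<union> Z)) * (v (insert i (Y \<union> Z)) - v (Y \<union> Z))
             \<le> ss_weight ((card A + 1) + card S) (card Y + card Z) * (v (Y \<union> T) - v Y)"
      unfolding card_YZ card_N by (intro mult_left_mono) (auto simp: ss_weight_nonneg)
  qed
  also have "\<dots> = (\<Sum>Y\<in>Pow A. ss_weight (card A + 1) (card Y) * (v (Y \<union> T) - v Y))"
  proof (rule sum.cong)
    fix Y assume "Y \<in> Pow A"
    then have "card Y < card A + 1" using fin by (simp add: card_mono le_imp_less_Suc)
    then show "(\<Sum>Z\<in>Pow S. ss_weight ((card A + 1) + card S) (card Y + card Z) * (v (Y \<union> T) - v Y))
             = ss_weight (card A + 1) (card Y) * (v (Y \<union> T) - v Y)"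
      using ss_weight_sum_Pow[OF fin(2), of "card Y" "card A + 1"] by (simp add: sum_distrib_right[symmetric])
  qed simp
  finally show ?thesis unfolding A_def .
qed

lemma wvg_mono:
  assumes "finite Y" "X \<subseteq> Y" "\<forall>j\<in>Y. w j \<ge> 0"
  shows "wvg q w X \<le> wvg q w Y"
proof -
  have "sum w X \<le> sum w Y" using assms by (intro sum_mono2) auto
  then show ?thesis unfolding wvg_def by auto
qed

lemma shapley_merged_player:
  assumes "finite N" "finite T"
  shows "shapley (merged_players N T) (wvg q (merged_weight w T)) None
         = (\<Sum>Y\<in>Pow (N - T). ss_weight (card (N - T) + 1) (card Y) * (wvg q w (Y \<union> T) - wvg q w Y))"
proof -
  define A where "A = N - T"
  let ?M = "merged_players N T"
  let ?w' = "merged_weight w T"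
  have fin_A: "finite A" using assms(1) unfolding A_def by simp
  have players: "?M - {None} = Some ` A" "finite ?M" "None \<in> ?M" "card ?M = card A + 1"
    using fin_A unfolding merged_players_def A_def by (auto simp: card_image)
  have inj: "inj_on (image Some) (Pow A)" by (rule inj_on_image_Pow) simp
  have "shapley ?M (wvg q ?w') None
        = (\<Sum>X\<in>Pow (Some ` A). ss_weight (card A + 1) (card X) * (wvg q ?w' (insert None X) - wvg q ?w' X))"
    using shapley_marginal_form[OF players(2,3)] players(1,4) by simp
  also have "\<dots> = (\<Sum>Y\<in>Pow A. ss_weight (card A + 1) (card (Some ` Y))
                    * (wvg q ?w' (insert None (Some ` Y)) - wvg q ?w' (Some ` Y)))"
    unfolding image_Pow_surj[OF refl, symmetric] by (simp add: sum.reindex[OF inj])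
  also have "\<dots> = (\<Sum>Y\<in>Pow A. ss_weight (card A + 1) (card Y) * (wvg q w (Y \<union> T) - wvg q w Y))"
  proof (rule sum.cong)
    fix Y assume Y: "Y \<in> Pow A"
    then have fin_Y: "finite Y" using fin_A by (auto intro: finite_subset)
    have weight: "sum ?w' (Some ` Y) = sum w Y"
      by (simp add: sum.reindex merged_weight_def)
    moreover have "Y \<inter> T = {}" using Y unfolding A_def by auto
    ultimately have "sum ?w' (insert None (Some ` Y)) = sum w (Y \<union> T)"
      using fin_Y assms(2) by (simp add: merged_weight_def sum.union_disjoint)
    then show "ss_weight (card A + 1) (card (Some ` Y)) * (wvg q ?w' (insert None (Some ` Y)) - wvg q ?w' (Some ` Y))
             = ss_weight (card A + 1) (card Y) * (wvg q w (Y \<union> T) - wvg q w Y)"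
      unfolding wvg_def weight by (simp add: card_image)
  qed simp
  finally show ?thesis unfolding A_def .
qed

theorem mainTheorem15:
  fixes n :: nat and q :: real and w :: "nat \<Rightarrow> real" and i :: nat and S :: "nat set"
  assumes "\<forall>j\<in>{1..n}. w j \<ge> 0"
    and "0 < q" and "q \<le> sum w {1..n}"
    and "i \<in> {1..n}"
    and "S \<subseteq> {1..n} - {i}"
  shows "shapley {1..n} (wvg q w) i
           \<le> shapley (merged_players {1..n} (insert i S))
                     (wvg q (merged_weight w (insert i S))) None
       \<and> shapley (merged_players {1..n} (insert i S))
                 (wvg q (merged_weight w (insert i S))) None \<le> 1"
proof
  let ?T = "insert i S"
  have fin_T: "finite ?T" using assms(5) finite_subset by auto
  have mono: "wvg q w X \<le> wvg q w Y" if "X \<subseteq> Y" "Y \<subseteq> {1..n}" for X Y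
    using that assms(1) by (intro wvg_mono) (auto intro: finite_subset)
  show "shapley {1..n} (wvg q w) i
        \<le> shapley (merged_players {1..n} ?T) (wvg q (merged_weight w ?T)) None"
    unfolding shapley_merged_player[OF finite_atLeastAtMost fin_T]
    using shapley_le_annexation_sum[OF finite_atLeastAtMost assms(4,5) mono] by simp
  show "shapley (merged_players {1..n} ?T) (wvg q (merged_weight w ?T)) None \<le> 1"
    by (rule shapley_le_one) (auto simp: merged_players_def wvg_def)
qed

end
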